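(* For every finite alphabet $\Sigma$ and every language $\mathbb{L}\subseteq\Sigma^*$: $\mathbb{L}$ is PTL-definable if and only if $\mathbb{L}=\mathbb{L}(\phi)$ for some $\mathbf{PFO}^2$ sentence $\phi$ over $\Sigma$.
   Context: Fix a finite alphabet $\Sigma$. Formulas of $\mathbf{PTL}$ over $\Sigma$ are generated by: $\pi_a$ for each $a\in\Sigma$; $\psi_1\wedge\psi_2$; $\neg\psi$; $\mathbf{P}\psi$ ("past"). For $w=w_1\cdots w_N\in\Sigma^*$ and $n\in\{1,\dots,N+1\}$: $w,n\models\pi_a$ iff $n\le N$ and $w_n=a$; $w,n\models\psi_1\wedge\psi_2$ iff both hold; $w,n\models\neg\psi$ iff $w,n\not\models\psi$; $w,n\models\mathbf{P}\psi$ iff there is $m$ with $1\le m<n$ and $w,m\models\psi$. Write $w\models\psi$ iff $w,N+1\models\psi$, and $\mathbb{L}(\psi)=\{w\in\Sigma^*:w\models\psi\}$; a language is PTL-definable if it equals $\mathbb{L}(\psi)$ for some PTL formula $\psi$. Formulas of $\mathbf{PFO}^2$ over $\Sigma$ use only two position variables $x,y$ (which may be re-quantified). Atomic formulas are $\pi_a(z)$ ($a\in\Sigma$, $z\in\{x,y\}$; "position $z$ carries $a$") and $z<z'$ ($z,z'\in\{x,y\}$). Formulas are closed under $\wedge$ and $\neg$ and under the quantifier formations: from $\phi(x,y)$ form $\exists y<x:\phi(x,y)$ and $\exists x<y:\phi(x,y)$; from a formula $\phi(x)$ whose only free variable is $x$ form $\exists x<y:\phi(x)$ (free variable $y$) and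 $\exists x:\phi(x)$ (no free variable); and symmetrically with $x,y$ interchanged. $\exists y<x:\phi$ means there is a position $y<x$ satisfying $\phi$. On a string $w$ of length $N$, quantified variables range over $\{1,\dots,N\}$, a free variable may be assigned any position in $\{1,\dots,N+1\}$, and $\pi_a(z)$ holds iff $z\le N$ and $w_z=a$. A sentence is a formula with no free variables; it defines $\mathbb{L}(\phi)=\{w\in\Sigma^*:w\models\phi\}$. *)

theory Defs
  imports Main
begin

text \<open>Strings over the alphabet 'a are lists; positions are 1-based:
  position n of w (1 <= n <= length w) carries the letter w ! (n - 1),
  and position length w + 1 is the extra "end" position.\<close>

datatype 'a ptl =
    PPi 'a
  | PAnd "'a ptl" "'a ptl"
  | PNot "'a ptl"
  | PPast "'a ptl"

fun ptl_sat :: "'a list \<Rightarrow> nat \<Rightarrow> 'a ptl \<Rightarrow> bool" where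
  "ptl_sat w n (PPi a) = (n \<le> length w \<and> w ! (n - 1) = a)"
| "ptl_sat w n (PAnd p q) = (ptl_sat w n p \<and> ptl_sat w n q)"
| "ptl_sat w n (PNot p) = (\<not> ptl_sat w n p)"
| "ptl_sat w n (PPast p) = (\<exists>m. 1 \<le> m \<and> m < n \<and> ptl_sat w m p)"

definition ptl_models :: "'a list \<Rightarrow> 'a ptl \<Rightarrow> bool" where
  "ptl_models w p = ptl_sat w (length w + 1) p"

definition ptl_lang :: "'a ptl \<Rightarrow> 'a list set" where
  "ptl_lang p = {w. ptl_models w p}"

definition ptl_definable :: "'a list set \<Rightarrow> bool" where
  "ptl_definable L = (\<exists>p. L = ptl_lang p)"

datatype var = VX | VY

text \<open>Raw syntax; the quantifier formations of PFO2 are enforced by pfo_wf.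
  FExLess z z' phi stands for (exists z < z' : phi); FEx z phi for (exists z : phi).\<close>
datatype 'a pfo =
    FPi 'a var
  | FLess var var
  | FAnd "'a pfo" "'a pfo"
  | FNot "'a pfo"
  | FExLess var var "'a pfo"
  | FEx var "'a pfo"

fun pfo_free :: "'a pfo \<Rightarrow> var set" where
  "pfo_free (FPi a z) = {z}"
| "pfo_free (FLess z z') = {z, z'}"
| "pfo_free (FAnd p q) = pfo_free p \<union> pfo_free q"
| "pfo_free (FNot p) = pfo_free p"
| "pfo_free (FExLess z z' p) = (pfo_free p - {z}) \<union> {z'}"
| "pfo_free (FEx z p) = pfo_free p - {z}"

fun pfo_wf :: "'a pfo \<Rightarrow> bool" where
  "pfo_wf (FPi a z) = True"
| "pfo_wf (FLess z z') = True"
| "pfo_wf (FAnd p q) = (pfo_wf p \<and> pfo_wf q)"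
| "pfo_wf (FNot p) = pfo_wf p"
| "pfo_wf (FExLess z z' p) = (z \<noteq> z' \<and> pfo_wf p)"
| "pfo_wf (FEx z p) = (pfo_wf p \<and> pfo_free p \<subseteq> {z})"

definition pfo_sentence :: "'a pfo \<Rightarrow> bool" where
  "pfo_sentence p = (pfo_wf p \<and> pfo_free p = {})"

fun pfo_sat :: "'a list \<Rightarrow> (var \<Rightarrow> nat) \<Rightarrow> 'a pfo \<Rightarrow> bool" where
  "pfo_sat w s (FPi a z) = (s z \<le> length w \<and> w ! (s z - 1) = a)"
| "pfo_sat w s (FLess z z') = (s z < s z')"
| "pfo_sat w s (FAnd p q) = (pfo_sat w s p \<and> pfo_sat w s q)"
| "pfo_sat w s (FNot p) = (\<not> pfo_sat w s p)"
| "pfo_sat w s (FExLess z z' p) =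
     (\<exists>m. 1 \<le> m \<and> m \<le> length w \<and> m < s z' \<and> pfo_sat w (s(z := m)) p)"
| "pfo_sat w s (FEx z p) =
     (\<exists>m. 1 \<le> m \<and> m \<le> length w \<and> pfo_sat w (s(z := m)) p)"

text \<open>For a sentence the assignment is irrelevant; we fix both variables to
  the end position length w + 1.\<close>
definition pfo_models :: "'a list \<Rightarrow> 'a pfo \<Rightarrow> bool" where
  "pfo_models w p = pfo_sat w (\<lambda>_. length w + 1) p"

definition pfo_lang :: "'a pfo \<Rightarrow> 'a list set" where
  "pfo_lang p = {w. pfo_models w p}"

end

theory Submission
  imports Defs
begin

text \<open>A PTL formula evaluated at a position z translates into PFO2 with z free: the past
  modality P\<psi> at z becomes (exists z' < z : \<psi>(z')), using the other variable z'.
  Conversely, every PFO2 formula \<phi>(x, y) is equivalent, for x and y ranging over the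
  positions, to a disjunction of clauses, each fixing the relative order of x and y and
  requiring a PTL formula at x, one at y, and one at the end position. Such disjunctions
  are closed under the Boolean connectives, and (exists z < z' : \<phi>) distributes over
  them: in a clause where z lies below z', the condition \<alpha> on z becomes P\<alpha> at z'. The
  unbounded (exists z : \<phi>) is the same with z' moved to the end position, which is
  harmless since z is the only free variable of \<phi>. For a sentence both variables sit at
  the end position, where the clauses become PTL formulas.\<close>

fun other :: "var \<Rightarrow> var" where
  "other VX = VY"
| "other VY = VX"

lemma other_neq [simp]: "other z \<noteq> z" "z \<noteq> other z"
  by (cases z; simp)+

lemma neq_imp_eq_other: "z \<noteq> z' \<Longrightarrow> z' = other z"
  by (cases z; cases z') auto

lemma all_var_iff: "(\<forall>v. P v) \<longleftrightarrow> P z \<and> P (other z)"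
  by (metis neq_imp_eq_other)

fun pfo_of_ptl :: "var \<Rightarrow> 'a ptl \<Rightarrow> 'a pfo" where
  "pfo_of_ptl z (PPi a) = FPi a z"
| "pfo_of_ptl z (PAnd p q) = FAnd (pfo_of_ptl z p) (pfo_of_ptl z q)"
| "pfo_of_ptl z (PNot p) = FNot (pfo_of_ptl z p)"
| "pfo_of_ptl z (PPast p) = FExLess (other z) z (pfo_of_ptl (other z) p)"

lemma pfo_wf_pfo_of_ptl: "pfo_wf (pfo_of_ptl z p)"
  by (induction p arbitrary: z) auto

lemma pfo_free_pfo_of_ptl: "pfo_free (pfo_of_ptl z p) \<subseteq> {z}"
  by (induction p arbitrary: z) fastforce+

lemma pfo_sat_pfo_of_ptl:
  "s z \<le> length w + 1 \<Longrightarrow> pfo_sat w s (pfo_of_ptl z p) \<longleftrightarrow> ptl_sat w (s z) p"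
proof (induction p arbitrary: z s)
  case (PPast p)
  have "pfo_sat w (s(other z := m)) (pfo_of_ptl (other z) p) \<longleftrightarrow>
      ptl_sat w ((s(other z := m)) (other z)) p" if "m \<le> length w" for m
    by (rule PPast.IH) (use that in simp)
  then have "pfo_sat w s (pfo_of_ptl z (PPast p)) \<longleftrightarrow>
      (\<exists>m. 1 \<le> m \<and> m \<le> length w \<and> m < s z \<and> ptl_sat w m p)"
    by auto
  also have "\<dots> \<longleftrightarrow> ptl_sat w (s z) (PPast p)"
    using PPast.prems by auto
  finally show ?case .
qed auto

definition pfo_false :: "'a pfo" where
  "pfo_false = FEx VX (FLess VX VX)"

text \<open>Evaluation at the end position, where no letter occurs.\<close>

fun pfo_sentence_of_ptl :: "'a ptl \<Rightarrow> 'a pfo" where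
  "pfo_sentence_of_ptl (PPi a) = pfo_false"
| "pfo_sentence_of_ptl (PAnd p q) = FAnd (pfo_sentence_of_ptl p) (pfo_sentence_of_ptl q)"
| "pfo_sentence_of_ptl (PNot p) = FNot (pfo_sentence_of_ptl p)"
| "pfo_sentence_of_ptl (PPast p) = FEx VX (pfo_of_ptl VX p)"

lemma pfo_sentence_pfo_sentence_of_ptl: "pfo_sentence (pfo_sentence_of_ptl p)"
  unfolding pfo_sentence_def
  by (induction p) (auto simp: pfo_false_def pfo_wf_pfo_of_ptl dest: subsetD[OF pfo_free_pfo_of_ptl])

lemma pfo_sat_pfo_sentence_of_ptl: "pfo_sat w s (pfo_sentence_of_ptl p) \<longleftrightarrow> ptl_models w p"
  unfolding ptl_models_def
proof (induction p arbitrary: s)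
  case (PPast p)
  show ?case using pfo_sat_pfo_of_ptl[of "s(VX := m)" VX w p for m] by auto
qed (auto simp: pfo_false_def)

lemma ptl_definable_imp_pfo_definable:
  assumes "ptl_definable L"
  shows "\<exists>\<phi>. pfo_sentence \<phi> \<and> L = pfo_lang \<phi>"
proof -
  obtain p where "L = ptl_lang p"
    using assms unfolding ptl_definable_def by blast
  then have "L = pfo_lang (pfo_sentence_of_ptl p)"
    by (simp add: ptl_lang_def pfo_lang_def pfo_models_def pfo_sat_pfo_sentence_of_ptl)
  then show ?thesis
    using pfo_sentence_pfo_sentence_of_ptl by blast
qed

definition ptl_true :: "'a ptl" where
  "ptl_true = PNot (PAnd (PPi undefined) (PNot (PPi undefined)))"

lemma ptl_sat_ptl_true [simp]: "ptl_sat w n ptl_true"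
  by (simp add: ptl_true_def)

definition ptl_or :: "'a ptl \<Rightarrow> 'a ptl \<Rightarrow> 'a ptl" where
  "ptl_or p q = PNot (PAnd (PNot p) (PNot q))"

fun ptl_Disj :: "'a ptl list \<Rightarrow> 'a ptl" where
  "ptl_Disj [] = PNot ptl_true"
| "ptl_Disj (p # ps) = ptl_or p (ptl_Disj ps)"

lemma ptl_sat_ptl_Disj: "ptl_sat w n (ptl_Disj ps) \<longleftrightarrow> (\<exists>p\<in>set ps. ptl_sat w n p)"
  by (induction ps) (auto simp: ptl_or_def)

lemma pfo_sat_cong:
  "(\<And>v. v \<in> pfo_free p \<Longrightarrow> s v = s' v) \<Longrightarrow> pfo_sat w s p \<longleftrightarrow> pfo_sat w s' p"
proof (induction p arbitrary: s s')
  case (FAnd p q)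
  have "pfo_sat w s p \<longleftrightarrow> pfo_sat w s' p" and "pfo_sat w s q \<longleftrightarrow> pfo_sat w s' q"
    by (rule FAnd.IH; use FAnd.prems in simp)+
  then show ?case
    by simp
next
  case (FNot p)
  have "pfo_sat w s p \<longleftrightarrow> pfo_sat w s' p"
    by (rule FNot.IH) (use FNot.prems in simp)
  then show ?case
    by simp
next
  case (FExLess z z' p)
  have "pfo_sat w (s(z := m)) p \<longleftrightarrow> pfo_sat w (s'(z := m)) p" for m
    by (rule FExLess.IH) (use FExLess.prems in auto)
  then show ?case
    using FExLess.prems by simp
next
  case (FEx z p)
  have "pfo_sat w (s(z := m)) p \<longleftrightarrow> pfo_sat w (s'(z := m)) p" for m
    by (rule FEx.IH) (use FEx.prems in auto)
  then show ?case
    by simp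
qed simp_all

datatype relpos = Lt | Eq | Gt

definition order_type :: "(var \<Rightarrow> nat) \<Rightarrow> relpos" where
  "order_type s = (if s VX < s VY then Lt else if s VX = s VY then Eq else Gt)"

definition below :: "var \<Rightarrow> relpos" where
  "below z = (if z = VX then Lt else Gt)"

lemma order_type_eq_below: "order_type s = below z \<longleftrightarrow> s z < s (other z)"
  by (cases z) (auto simp: order_type_def below_def)

datatype 'a clause = Clause (order: "relpos set") (at_var: "var \<Rightarrow> 'a ptl") (at_end: "'a ptl")

definition clause_sat :: "'a list \<Rightarrow> (var \<Rightarrow> nat) \<Rightarrow> 'a clause \<Rightarrow> bool" where
  "clause_sat w s c \<longleftrightarrow>
     order_type s \<in> order c \<and> (\<forall>v. ptl_sat w (s v) (at_var c v)) \<and> ptl_models w (at_end c)"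

definition dnf_sat :: "'a list \<Rightarrow> (var \<Rightarrow> nat) \<Rightarrow> 'a clause list \<Rightarrow> bool" where
  "dnf_sat w s cs \<longleftrightarrow> (\<exists>c\<in>set cs. clause_sat w s c)"

definition valid_assignment :: "'a list \<Rightarrow> (var \<Rightarrow> nat) \<Rightarrow> bool" where
  "valid_assignment w s \<longleftrightarrow> (\<forall>v. s v \<le> length w + 1)"

definition separable :: "('a list \<Rightarrow> (var \<Rightarrow> nat) \<Rightarrow> bool) \<Rightarrow> bool" where
  "separable P \<longleftrightarrow> (\<exists>cs. \<forall>w s. valid_assignment w s \<longrightarrow> P w s = dnf_sat w s cs)"

lemma separableE:
  assumes "separable P"
  obtains cs where "\<And>w s. valid_assignment w s \<Longrightarrow> P w s \<longleftrightarrow> dnf_sat w s cs"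
  using assms unfolding separable_def by blast

fun clause_conj :: "'a clause \<Rightarrow> 'a clause \<Rightarrow> 'a clause" where
  "clause_conj (Clause R f g) (Clause R' f' g') =
     Clause (R \<inter> R') (\<lambda>v. PAnd (f v) (f' v)) (PAnd g g')"

lemma clause_sat_clause_conj:
  "clause_sat w s (clause_conj c d) \<longleftrightarrow> clause_sat w s c \<and> clause_sat w s d"
  by (cases c; cases d) (auto simp: clause_sat_def ptl_models_def)

definition dnf_conj :: "'a clause list \<Rightarrow> 'a clause list \<Rightarrow> 'a clause list" where
  "dnf_conj cs ds = [clause_conj c d. c \<leftarrow> cs, d \<leftarrow> ds]"

lemma dnf_sat_dnf_conj: "dnf_sat w s (dnf_conj cs ds) \<longleftrightarrow> dnf_sat w s cs \<and> dnf_sat w s ds"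
  by (auto simp: dnf_conj_def dnf_sat_def clause_sat_clause_conj)

definition clause_neg :: "'a clause \<Rightarrow> 'a clause list" where
  "clause_neg c =
     [Clause (- order c) (\<lambda>_. ptl_true) ptl_true,
      Clause UNIV ((\<lambda>_. ptl_true)(VX := PNot (at_var c VX))) ptl_true,
      Clause UNIV ((\<lambda>_. ptl_true)(VY := PNot (at_var c VY))) ptl_true,
      Clause UNIV (\<lambda>_. ptl_true) (PNot (at_end c))]"

lemma dnf_sat_clause_neg: "dnf_sat w s (clause_neg c) \<longleftrightarrow> \<not> clause_sat w s c"
  by (auto simp: clause_neg_def dnf_sat_def clause_sat_def ptl_models_def all_var_iff[of _ VX])

fun dnf_neg :: "'a clause list \<Rightarrow> 'a clause list" where
  "dnf_neg [] = [Clause UNIV (\<lambda>_. ptl_true) ptl_true]"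
| "dnf_neg (c # cs) = dnf_conj (clause_neg c) (dnf_neg cs)"

lemma dnf_sat_dnf_neg: "dnf_sat w s (dnf_neg cs) \<longleftrightarrow> \<not> dnf_sat w s cs"
  by (induction cs)
    (auto simp: dnf_sat_dnf_conj dnf_sat_clause_neg, auto simp: dnf_sat_def clause_sat_def ptl_models_def)

lemma separable_conj:
  assumes "separable P" and "separable Q"
  shows "separable (\<lambda>w s. P w s \<and> Q w s)"
proof -
  from assms obtain cs ds
    where "\<forall>w s. valid_assignment w s \<longrightarrow> P w s \<longleftrightarrow> dnf_sat w s cs"
      and "\<forall>w s. valid_assignment w s \<longrightarrow> Q w s \<longleftrightarrow> dnf_sat w s ds"
    unfolding separable_def by blast
  then show ?thesis
    unfolding separable_def by (intro exI[of _ "dnf_conj cs ds"]) (simp add: dnf_sat_dnf_conj)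
qed

lemma separable_neg:
  assumes "separable P"
  shows "separable (\<lambda>w s. \<not> P w s)"
proof -
  obtain cs where "\<And>w s. valid_assignment w s \<Longrightarrow> P w s \<longleftrightarrow> dnf_sat w s cs"
    using separableE[OF assms] by blast
  then show ?thesis
    unfolding separable_def by (intro exI[of _ "dnf_neg cs"]) (simp add: dnf_sat_dnf_neg)
qed

definition below_formula :: "var \<Rightarrow> 'a clause \<Rightarrow> 'a ptl" where
  "below_formula z c = PAnd (at_var c (other z)) (PPast (at_var c z))"

lemma clause_sat_exists_below:
  "(\<exists>m. 1 \<le> m \<and> m < b \<and> clause_sat w (s(z := m, other z := b)) c) \<longleftrightarrow>
     below z \<in> order c \<and> ptl_sat w b (below_formula z c) \<and> ptl_models w (at_end c)"
proof -
  have "clause_sat w (s(z := m, other z := b)) c \<longleftrightarrow>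
      below z \<in> order c \<and> ptl_sat w m (at_var c z) \<and> ptl_sat w b (at_var c (other z)) \<and>
      ptl_models w (at_end c)" if "m < b" for m
    using that order_type_eq_below[of "s(z := m, other z := b)" z]
    by (auto simp: clause_sat_def all_var_iff[of _ z])
  then show ?thesis
    by (auto simp: below_formula_def)
qed

lemma separable_exists_below:
  assumes "separable (\<lambda>w s. pfo_sat w s p)"
  obtains cs where "\<And>w s b. valid_assignment w s \<Longrightarrow> b \<le> length w + 1 \<Longrightarrow>
    (\<exists>m. 1 \<le> m \<and> m < b \<and> pfo_sat w (s(z := m, other z := b)) p) \<longleftrightarrow>
    (\<exists>c\<in>set cs. ptl_sat w b (below_formula z c) \<and> ptl_models w (at_end c))"
proof -
  obtain cs where cs: "\<And>w s. valid_assignment w s \<Longrightarrow> pfo_sat w s p \<longleftrightarrow> dnf_sat w s cs"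
    using separableE[OF assms] by blast
  have "(\<exists>m. 1 \<le> m \<and> m < b \<and> pfo_sat w (s(z := m, other z := b)) p) \<longleftrightarrow>
    (\<exists>c\<in>set (filter (\<lambda>c. below z \<in> order c) cs).
       ptl_sat w b (below_formula z c) \<and> ptl_models w (at_end c))"
    if "valid_assignment w s" and "b \<le> length w + 1" for w s b
  proof -
    have "pfo_sat w (s(z := m, other z := b)) p \<longleftrightarrow> dnf_sat w (s(z := m, other z := b)) cs"
      if "m < b" for m
      using that \<open>valid_assignment w s\<close> \<open>b \<le> length w + 1\<close>
      by (intro cs) (simp add: valid_assignment_def)
    then have "(\<exists>m. 1 \<le> m \<and> m < b \<and> pfo_sat w (s(z := m, other z := b)) p) \<longleftrightarrow>
        (\<exists>m. 1 \<le> m \<and> m < b \<and> dnf_sat w (s(z := m, other z := b)) cs)"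
      by blast
    also have "\<dots> \<longleftrightarrow> (\<exists>c\<in>set cs. \<exists>m. 1 \<le> m \<and> m < b \<and> clause_sat w (s(z := m, other z := b)) c)"
      unfolding dnf_sat_def by blast
    also have "\<dots> \<longleftrightarrow> (\<exists>c\<in>set cs.
        below z \<in> order c \<and> ptl_sat w b (below_formula z c) \<and> ptl_models w (at_end c))"
      by (simp only: clause_sat_exists_below)
    finally show ?thesis
      by auto
  qed
  then show thesis
    by (rule that)
qed

lemma separable_exists_less:
  assumes "separable (\<lambda>w s. pfo_sat w s p)"
  shows "separable (\<lambda>w s. pfo_sat w s (FExLess z (other z) p))"
proof -
  obtain cs where cs: "\<And>w s b. valid_assignment w s \<Longrightarrow> b \<le> length w + 1 \<Longrightarrow>
    (\<exists>m. 1 \<le> m \<and> m < b \<and> pfo_sat w (s(z := m, other z := b)) p) \<longleftrightarrow>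
    (\<exists>c\<in>set cs. ptl_sat w b (below_formula z c) \<and> ptl_models w (at_end c))"
    using separable_exists_below[OF assms] by blast
  let ?clause = "\<lambda>c. Clause UNIV ((\<lambda>_. ptl_true)(other z := below_formula z c)) (at_end c)"
  have "pfo_sat w s (FExLess z (other z) p) \<longleftrightarrow> dnf_sat w s (map ?clause cs)"
    if "valid_assignment w s" for w s
  proof -
    have "s (other z) \<le> length w + 1"
      using that by (simp add: valid_assignment_def)
    then have "pfo_sat w s (FExLess z (other z) p) \<longleftrightarrow>
        (\<exists>m. 1 \<le> m \<and> m < s (other z) \<and> pfo_sat w (s(z := m, other z := s (other z))) p)"
      by (auto simp: fun_upd_idem)
    also have "\<dots> \<longleftrightarrow> dnf_sat w s (map ?clause cs)"
      using that cs[OF that, of "s (other z)"]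
      by (auto simp: valid_assignment_def dnf_sat_def clause_sat_def all_var_iff[of _ z])
    finally show ?thesis .
  qed
  then show ?thesis
    unfolding separable_def by blast
qed

lemma separable_exists:
  assumes "separable (\<lambda>w s. pfo_sat w s p)" and "pfo_free p \<subseteq> {z}"
  shows "separable (\<lambda>w s. pfo_sat w s (FEx z p))"
proof -
  obtain cs where cs: "\<And>w s b. valid_assignment w s \<Longrightarrow> b \<le> length w + 1 \<Longrightarrow>
    (\<exists>m. 1 \<le> m \<and> m < b \<and> pfo_sat w (s(z := m, other z := b)) p) \<longleftrightarrow>
    (\<exists>c\<in>set cs. ptl_sat w b (below_formula z c) \<and> ptl_models w (at_end c))"
    using separable_exists_below[OF assms(1)] by blast
  let ?clause = "\<lambda>c. Clause UNIV (\<lambda>_. ptl_true) (PAnd (at_end c) (below_formula z c))"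
  have "pfo_sat w s (FEx z p) \<longleftrightarrow> dnf_sat w s (map ?clause cs)"
    if "valid_assignment w s" for w s
  proof -
    have "pfo_sat w (s(z := m)) p \<longleftrightarrow> pfo_sat w (s(z := m, other z := length w + 1)) p" for m
      using assms(2) by (intro pfo_sat_cong) auto
    then have "pfo_sat w s (FEx z p) \<longleftrightarrow>
        (\<exists>m. 1 \<le> m \<and> m < length w + 1 \<and> pfo_sat w (s(z := m, other z := length w + 1)) p)"
      by auto
    also have "\<dots> \<longleftrightarrow> dnf_sat w s (map ?clause cs)"
      using cs[OF that, of "length w + 1"]
      by (auto simp: dnf_sat_def clause_sat_def ptl_models_def order_type_def)
    finally show ?thesis .
  qed
  then show ?thesis
    unfolding separable_def by blast
qed

lemma separable_pfo_sat: "pfo_wf \<phi> \<Longrightarrow> separable (\<lambda>w s. pfo_sat w s \<phi>)"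
proof (induction \<phi>)
  case (FPi a z)
  show ?case
    unfolding separable_def
    by (intro exI[of _ "[Clause UNIV ((\<lambda>_. ptl_true)(z := PPi a)) ptl_true]"])
      (auto simp: dnf_sat_def clause_sat_def ptl_models_def all_var_iff[of _ z])
next
  case (FLess z z')
  show ?case
  proof (cases "z = z'")
    case True
    then show ?thesis
      unfolding separable_def by (intro exI[of _ "[]"]) (simp add: dnf_sat_def)
  next
    case False
    then have "z' = other z"
      by (rule neq_imp_eq_other)
    then show ?thesis
      unfolding separable_def
      by (intro exI[of _ "[Clause {below z} (\<lambda>_. ptl_true) ptl_true]"])
        (simp add: dnf_sat_def clause_sat_def ptl_models_def order_type_eq_below)
  qed
next
  case (FAnd p q)
  then have "separable (\<lambda>w s. pfo_sat w s p)" and "separable (\<lambda>w s. pfo_sat w s q)"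
    by simp_all
  then show ?case
    unfolding pfo_sat.simps by (rule separable_conj)
next
  case (FNot p)
  then show ?case
    unfolding pfo_sat.simps by (intro separable_neg) simp
next
  case (FExLess z z' p)
  then have "z' = other z" and "separable (\<lambda>w s. pfo_sat w s p)"
    by (simp_all add: neq_imp_eq_other)
  then show ?case
    using separable_exists_less by blast
next
  case (FEx z p)
  then show ?case
    by (intro separable_exists) simp_all
qed

definition clause_formula :: "'a clause \<Rightarrow> 'a ptl" where
  "clause_formula c = PAnd (at_var c VX) (PAnd (at_var c VY) (at_end c))"

lemma clause_sat_at_end:
  "clause_sat w (\<lambda>_. length w + 1) c \<longleftrightarrow> Eq \<in> order c \<and> ptl_models w (clause_formula c)"
  by (auto simp: clause_sat_def clause_formula_def ptl_models_def order_type_def all_var_iff[of _ VX])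

lemma pfo_definable_imp_ptl_definable:
  assumes "pfo_sentence \<phi>"
  shows "ptl_definable (pfo_lang \<phi>)"
proof -
  obtain cs where cs: "\<And>w s. valid_assignment w s \<Longrightarrow> pfo_sat w s \<phi> \<longleftrightarrow> dnf_sat w s cs"
    using assms separable_pfo_sat separableE unfolding pfo_sentence_def by blast
  let ?p = "ptl_Disj (map clause_formula (filter (\<lambda>c. Eq \<in> order c) cs))"
  have "pfo_models w \<phi> \<longleftrightarrow> ptl_models w ?p" for w
  proof -
    have "pfo_models w \<phi> \<longleftrightarrow> dnf_sat w (\<lambda>_. length w + 1) cs"
      unfolding pfo_models_def by (rule cs) (simp add: valid_assignment_def)
    then show ?thesis
      unfolding dnf_sat_def clause_sat_at_end ptl_models_def ptl_sat_ptl_Disj by auto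
  qed
  then have "pfo_lang \<phi> = ptl_lang ?p"
    by (simp add: pfo_lang_def ptl_lang_def)
  then show ?thesis
    unfolding ptl_definable_def by blast
qed

theorem mainTheorem1:
  fixes L :: "('a::finite) list set"
  shows "ptl_definable L \<longleftrightarrow> (\<exists>\<phi> :: 'a pfo. pfo_sentence \<phi> \<and> L = pfo_lang \<phi>)"
  using ptl_definable_imp_pfo_definable pfo_definable_imp_ptl_definable by blast

end
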